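(* Let $B>1$ and $k\ge1$ be constants, and let $(\theta_L,\theta_R)$ with $\theta_L,\theta_R\in(0,1)$ be the positive solution of $\exp(-B\sqrt k\,\theta_R)=1-\theta_L$ and $\exp(-\frac{B}{\sqrt k}\theta_L)=1-\theta_R$. Then $(1-\theta_L)(1-\theta_R)B^2<1$.
   Context: $\log$ and $\exp$ are natural. The pair $(\theta_L,\theta_R)$ describes the asymptotic fractions of $V_L$ and $V_R$ lying in the giant component of the bipartite random graph $G(n,kn,\frac{B}{n\sqrt k})$. *)

theory Defs
  imports Complex_Main
begin

end

theory Submission
  imports Defs
begin

text \<open>With \<open>a = B\<surd>k\<close> and \<open>b = B/\<surd>k\<close>, so that \<open>a b = B\<^sup>2\<close>, the elementary
  inequality \<open>t e\<^sup>-\<^sup>t < 1 - e\<^sup>-\<^sup>t\<close> for \<open>t > 0\<close> applied to each fixed-point equation gives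
  \<open>a \<theta>\<^sub>R (1 - \<theta>\<^sub>L) < \<theta>\<^sub>L\<close> and \<open>b \<theta>\<^sub>L (1 - \<theta>\<^sub>R) < \<theta>\<^sub>R\<close>; multiplying the two and
  cancelling \<open>\<theta>\<^sub>L \<theta>\<^sub>R\<close> yields the claim.\<close>

lemma mult_exp_minus_less_one_minus_exp:
  fixes t :: real
  assumes "t > 0"
  shows "t * exp (- t) < 1 - exp (- t)"
proof -
  have "(1 + t) * exp (- t) < exp t * exp (- t)"
    using exp_minus_greater[of "- t"] assms by simp
  also have "exp t * exp (- t) = 1"
    by (simp add: exp_minus_inverse)
  finally show ?thesis
    by (simp add: algebra_simps)
qed

lemma exp_fixed_point_bound:
  fixes a \<theta> \<theta>' :: real
  assumes "a > 0" and "\<theta>' > 0" and "exp (- (a * \<theta>')) = 1 - \<theta>"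
  shows "a * \<theta>' * (1 - \<theta>) < \<theta>"
  using mult_exp_minus_less_one_minus_exp[of "a * \<theta>'"] assms by simp

lemma exp_fixed_point_pair_product_bound:
  fixes a b \<theta>L \<theta>R :: real
  assumes "a > 0" and "b > 0" and "0 < \<theta>L" and "0 < \<theta>R"
    and eqL: "exp (- (a * \<theta>R)) = 1 - \<theta>L"
    and eqR: "exp (- (b * \<theta>L)) = 1 - \<theta>R"
  shows "(1 - \<theta>L) * (1 - \<theta>R) * (a * b) < 1"
proof -
  have boundL: "a * \<theta>R * (1 - \<theta>L) < \<theta>L"
    using exp_fixed_point_bound[OF _ _ eqL] assms by simp
  have boundR: "b * \<theta>L * (1 - \<theta>R) < \<theta>R"
    using exp_fixed_point_bound[OF _ _ eqR] assms by simp
  have "1 - \<theta>L > 0" "1 - \<theta>R > 0"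
    using exp_gt_zero eqL eqR by metis+
  then have "(a * \<theta>R * (1 - \<theta>L)) * (b * \<theta>L * (1 - \<theta>R)) < \<theta>L * \<theta>R"
    using mult_strict_mono[OF boundL boundR] assms by simp
  then have "(\<theta>L * \<theta>R) * ((1 - \<theta>L) * (1 - \<theta>R) * (a * b)) < (\<theta>L * \<theta>R) * 1"
    by (simp add: algebra_simps)
  then show ?thesis
    using assms(3,4) by (simp add: mult_less_cancel_left)
qed

theorem mainTheorem16:
  fixes B k \<theta>L \<theta>R :: real
  assumes "B > 1" and "k \<ge> 1"
    and "0 < \<theta>L" and "\<theta>L < 1" and "0 < \<theta>R" and "\<theta>R < 1"
    and "exp (- B * sqrt k * \<theta>R) = 1 - \<theta>L"
    and "exp (- (B / sqrt k) * \<theta>L) = 1 - \<theta>R"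
  shows "(1 - \<theta>L) * (1 - \<theta>R) * B\<^sup>2 < 1"
proof -
  have sqrt_k: "sqrt k > 0"
    using assms(2) by simp
  have "(1 - \<theta>L) * (1 - \<theta>R) * ((B * sqrt k) * (B / sqrt k)) < 1"
    by (rule exp_fixed_point_pair_product_bound) (use assms sqrt_k in auto)
  moreover have "(B * sqrt k) * (B / sqrt k) = B\<^sup>2"
    using sqrt_k by (simp add: power2_eq_square)
  ultimately show ?thesis
    by simp
qed

end
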